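(* Let $\mathbb{K}$ be a field and $f=a_0(x)+a_1(x)y+\cdots+a_n(x)y^n\in\mathbb{K}[x,y]$ with $n\geq 2$, $a_0,\ldots,a_n\in\mathbb{K}[x]$, $a_0a_n\neq 0$, such that $f$ has no nonconstant factor in $\mathbb{K}[x]$ and $\deg a_n>\max\{\deg a_0,\ldots,\deg a_{n-1}\}$. If $a_n$ is irreducible in $\mathbb{K}[x]$, or if $a_0$ is irreducible in $\mathbb{K}[x]$ and $\deg a_0\geq\deg a_n-\deg q$, where $q\in\mathbb{K}[x]$ is an irreducible factor of $a_n$ of smallest degree, then $f$ is irreducible over $\mathbb{K}[x]$.
   Context: $f$ is regarded as a polynomial in $y$ with coefficients in $\mathbb{K}[x]$; irreducibility over $\mathbb{K}[x]$ means irreducibility in $\mathbb{K}[x][y]$. *)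

theory Defs
  imports "HOL-Computational_Algebra.Polynomial_Factorial"
begin

end

theory Submission
  imports Defs
begin

text \<open>
  View \<open>f \<in> K[x][y]\<close> through its part of top \<open>x\<close>-degree: if \<open>d\<close> is the largest
  \<open>x\<close>-degree of a coefficient of \<open>f\<close>, collecting the \<open>x\<^sup>d\<close>-coefficients gives a
  polynomial in \<open>K[y]\<close>, and this construction is multiplicative. The degree
  hypothesis says that the top part of \<open>f\<close> is the monomial \<open>c y\<^sup>n\<close>; since a
  monomial only factors into monomials, the same holds for every factor of \<open>f\<close>.
  Hence in a nontrivial factorisation \<open>f = g h\<close> (both factors of positive
  \<open>y\<close>-degree, as \<open>f\<close> is primitive) we get \<open>a\<^sub>n = b c\<close> and \<open>a\<^sub>0 = b\<^sub>0 c\<^sub>0\<close>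
  with \<open>deg b\<^sub>0 < deg b\<close> and \<open>deg c\<^sub>0 < deg c\<close>, which each of the two
  hypotheses rules out by a degree count.
\<close>

(* The coefficients of g are polynomials in the inner variable x, and g is a polynomial
   in y over them; inner_degree g is the x-degree of g. *)
definition inner_degree :: "'a::zero poly poly \<Rightarrow> nat" where
  "inner_degree g = (MAX i\<in>{..degree g}. degree (coeff g i))"

definition inner_top :: "'a::zero poly poly \<Rightarrow> 'a poly" where
  "inner_top g = map_poly (\<lambda>p. coeff p (inner_degree g)) g"

lemma degree_coeff_le_inner_degree: "degree (coeff g i) \<le> inner_degree g"
proof (cases "i \<le> degree g")
  case True
  then show ?thesis unfolding inner_degree_def by (intro Max_ge) auto
next
  case False
  then show ?thesis by (simp add: coeff_eq_0)
qed

lemma inner_degree_attained: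
  assumes "g \<noteq> 0"
  obtains i where "coeff g i \<noteq> 0" "degree (coeff g i) = inner_degree g"
proof -
  have "inner_degree g \<in> (\<lambda>i. degree (coeff g i)) ` {..degree g}"
    unfolding inner_degree_def by (intro Max_in) auto
  then obtain i where i: "degree (coeff g i) = inner_degree g" by auto
  show thesis
  proof (cases "coeff g i = 0")
    case True
    then have "degree (lead_coeff g) = inner_degree g"
      using i degree_coeff_le_inner_degree[of g "degree g"] by simp
    then show thesis using that[of "degree g"] assms by simp
  qed (use i that in blast)
qed

lemma coeff_inner_top: "coeff (inner_top g) i = coeff (coeff g i) (inner_degree g)"
  unfolding inner_top_def by (simp add: coeff_map_poly)

lemma inner_top_eq_0_iff [simp]: "inner_top g = 0 \<longleftrightarrow> g = 0"
proof
  assume "inner_top g = 0"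
  show "g = 0"
  proof (rule ccontr)
    assume "g \<noteq> 0"
    then obtain i where "coeff g i \<noteq> 0" "degree (coeff g i) = inner_degree g"
      by (rule inner_degree_attained)
    then have "coeff (inner_top g) i \<noteq> 0" by (metis coeff_inner_top leading_coeff_0_iff)
    with \<open>inner_top g = 0\<close> show False by simp
  qed
qed (simp add: inner_top_def)

lemma degree_inner_top_le: "degree (inner_top g) \<le> degree g"
  unfolding inner_top_def by (rule map_poly_degree_leq)

lemma coeff_mult_at_degree_bounds:
  fixes p q :: "'a::idom poly"
  assumes "degree p \<le> m" "degree q \<le> n"
  shows "coeff (p * q) (m + n) = coeff p m * coeff q n"
proof (cases "degree p = m \<and> degree q = n")
  case True
  then show ?thesis using coeff_mult_degree_sum[of p q] by simp
next
  case False
  then have "degree p < m \<or> degree q < n" using assms by auto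
  moreover have "degree (p * q) < m + n"
    using calculation assms degree_mult_le[of p q] by linarith
  ultimately show ?thesis by (auto simp: coeff_eq_0)
qed

lemma inner_top_mult:
  fixes g h :: "'a::idom poly poly"
  shows "inner_top (g * h) = inner_top g * inner_top h"
proof (cases "g = 0 \<or> h = 0")
  case False
  define d where "d = inner_degree g + inner_degree h"
  have top: "coeff (coeff (g * h) k) d = coeff (inner_top g * inner_top h) k" for k
  proof -
    have "coeff (coeff (g * h) k) d = (\<Sum>i\<le>k. coeff (coeff g i * coeff h (k - i)) d)"
      by (simp add: coeff_mult coeff_sum)
    also have "\<dots> = (\<Sum>i\<le>k. coeff (inner_top g) i * coeff (inner_top h) (k - i))"
      unfolding d_def coeff_inner_top
      by (intro sum.cong refl coeff_mult_at_degree_bounds degree_coeff_le_inner_degree)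
    finally show ?thesis by (simp add: coeff_mult)
  qed
  have "degree (coeff (g * h) k) \<le> d" for k
  proof -
    have "degree (coeff g i * coeff h (k - i)) \<le> d" for i
      unfolding d_def
      by (meson add_mono degree_coeff_le_inner_degree degree_mult_le order_trans)
    then show ?thesis by (simp add: coeff_mult degree_sum_le)
  qed
  moreover have "inner_top g * inner_top h \<noteq> 0" using False by simp
  then obtain k where "coeff (coeff (g * h) k) d \<noteq> 0"
    using top by (metis leading_coeff_0_iff)
  then have "d \<le> inner_degree (g * h)"
    using le_degree degree_coeff_le_inner_degree order_trans by blast
  ultimately have "inner_degree (g * h) = d"
    using inner_degree_attained[of "g * h"] False by (metis le_antisym mult_eq_0_iff)
  then show ?thesis by (intro poly_eqI) (simp add: coeff_inner_top top)
qed (auto simp: inner_top_def)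

lemma factor_of_monom_is_monom:
  fixes p q :: "'a::idom poly"
  assumes "p * q = monom c n" "c \<noteq> 0" "i \<noteq> degree p"
  shows "coeff p i = 0"
proof -
  have p: "p \<noteq> 0" and q: "q \<noteq> 0" using assms by auto
  have "order 0 p + order 0 q = degree p + degree q"
    using assms order_mult[of p q 0] degree_mult_eq[OF p q] by (simp add: degree_monom_eq)
  moreover have "order 0 p \<le> degree p" "order 0 q \<le> degree q"
    using p q by (simp_all add: order_degree)
  ultimately have "degree p \<le> order 0 p" by linarith
  then have "\<forall>k<degree p. coeff p k = 0"
    using monom_1_dvd_iff[OF p] monom_1_dvd_iff' by blast
  then show ?thesis using assms(3) by (metis coeff_eq_0 linorder_neqE_nat)
qed

definition dominant_lead_coeff :: "'a::zero poly poly \<Rightarrow> bool" where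
  "dominant_lead_coeff g \<longleftrightarrow>
     (\<forall>i<degree g. coeff g i = 0 \<or> degree (coeff g i) < degree (lead_coeff g))"

lemma dominant_lead_coeff_iff_inner_top:
  fixes g :: "'a::zero poly poly"
  assumes "g \<noteq> 0"
  shows "dominant_lead_coeff g \<longleftrightarrow> (\<forall>i. i \<noteq> degree g \<longrightarrow> coeff (inner_top g) i = 0)"
proof
  assume dom: "dominant_lead_coeff g"
  have "degree (coeff g i) \<le> degree (lead_coeff g)" for i
    using dom unfolding dominant_lead_coeff_def
    by (metis coeff_eq_0 degree_0 le_eq_less_or_eq linorder_neqE_nat zero_le)
  moreover obtain j where "degree (coeff g j) = inner_degree g"
    using inner_degree_attained[OF assms] by blast
  ultimately have top: "inner_degree g = degree (lead_coeff g)"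
    by (metis degree_coeff_le_inner_degree le_antisym)
  show "\<forall>i. i \<noteq> degree g \<longrightarrow> coeff (inner_top g) i = 0"
    using dom unfolding dominant_lead_coeff_def coeff_inner_top top
    by (metis coeff_0 coeff_eq_0 linorder_neqE_nat)
next
  assume mono: "\<forall>i. i \<noteq> degree g \<longrightarrow> coeff (inner_top g) i = 0"
  have "coeff (inner_top g) (degree g) \<noteq> 0"
  proof
    assume "coeff (inner_top g) (degree g) = 0"
    with mono have "inner_top g = 0" by (metis coeff_0 poly_eqI)
    with assms show False by simp
  qed
  then have "inner_degree g \<le> degree (lead_coeff g)"
    by (simp add: coeff_inner_top le_degree)
  then have top: "inner_degree g = degree (lead_coeff g)"
    by (simp add: degree_coeff_le_inner_degree le_antisym)
  show "dominant_lead_coeff g"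
    unfolding dominant_lead_coeff_def
  proof (intro allI impI)
    fix i assume "i < degree g"
    with mono have "coeff (coeff g i) (degree (lead_coeff g)) = 0"
      by (simp add: coeff_inner_top flip: top)
    then show "coeff g i = 0 \<or> degree (coeff g i) < degree (lead_coeff g)"
      using degree_coeff_le_inner_degree[of g i] top
      by (metis le_neq_implies_less leading_coeff_0_iff)
  qed
qed

lemma dominant_lead_coeff_factor:
  fixes g h :: "'a::idom poly poly"
  assumes dom: "dominant_lead_coeff (g * h)" and gh: "g * h \<noteq> 0"
  shows "dominant_lead_coeff g"
proof -
  have g: "g \<noteq> 0" and h: "h \<noteq> 0" using gh by auto
  let ?c = "coeff (inner_top (g * h)) (degree (g * h))"
  have "inner_top (g * h) = monom ?c (degree (g * h))"
    using dom gh by (intro poly_eqI) (auto simp: dominant_lead_coeff_iff_inner_top coeff_monom)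
  moreover have "?c \<noteq> 0"
    using calculation gh by (metis inner_top_eq_0_iff monom_eq_0_iff)
  ultimately have "inner_top g * inner_top h = monom ?c (degree (g * h))"
    by (simp add: inner_top_mult)
  then have "coeff (inner_top g) i = 0" if "i \<noteq> degree (inner_top g)" for i
    using factor_of_monom_is_monom \<open>?c \<noteq> 0\<close> that by blast
  moreover have "degree (inner_top g) = degree g"
  proof -
    have "degree (inner_top g) + degree (inner_top h) = degree g + degree h"
      using \<open>inner_top g * inner_top h = _\<close> \<open>?c \<noteq> 0\<close> g h
      by (metis degree_monom_eq degree_mult_eq inner_top_eq_0_iff)
    then show ?thesis
      using degree_inner_top_le[of g] degree_inner_top_le[of h] by linarith
  qed
  ultimately show ?thesis using g by (simp add: dominant_lead_coeff_iff_inner_top)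
qed

lemma irreducibleI_dominant_lead_coeff:
  fixes f :: "'a::field poly poly"
  assumes "degree f \<noteq> 0" "coeff f 0 \<noteq> 0" "dominant_lead_coeff f"
    and primitive: "\<forall>b :: 'a poly. [:b:] dvd f \<longrightarrow> degree b = 0"
    and no_split: "\<And>b c b\<^sub>0 c\<^sub>0. lead_coeff f = b * c \<Longrightarrow> coeff f 0 = b\<^sub>0 * c\<^sub>0 \<Longrightarrow>
      degree b\<^sub>0 < degree b \<Longrightarrow> degree c\<^sub>0 < degree c \<Longrightarrow> False"
  shows "irreducible f"
proof (rule irreducibleI)
  show f: "f \<noteq> 0" using assms(2) by auto
  show "\<not> is_unit f" using assms(1) by (auto simp: is_unit_poly_iff)
  have positive_degree: "degree g \<noteq> 0" if "g dvd f" "\<not> is_unit g" for g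
  proof
    assume "degree g = 0"
    then obtain b where g: "g = [:b:]" by (rule degree_eq_zeroE)
    with that f primitive have "degree b = 0" "b \<noteq> 0" by auto
    with g that(2) show False by (simp add: is_unit_iff_degree is_unit_const_poly_iff)
  qed
  have low_below_lead: "degree (coeff g 0) < degree (lead_coeff g)"
    if "f = g * h" "\<not> is_unit g" for g h
  proof -
    have "dominant_lead_coeff g"
      using that(1) assms(3) f dominant_lead_coeff_factor by blast
    moreover have "coeff g 0 \<noteq> 0" using assms(2) that(1) by (auto simp: coeff_mult_0)
    ultimately show ?thesis
      using positive_degree[OF _ that(2)] that(1) by (auto simp: dominant_lead_coeff_def)
  qed
  fix g h assume gh: "f = g * h"
  show "is_unit g \<or> is_unit h"
  proof (rule ccontr)
    assume "\<not> (is_unit g \<or> is_unit h)"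
    have "lead_coeff f = lead_coeff g * lead_coeff h" "coeff f 0 = coeff g 0 * coeff h 0"
      by (simp_all add: gh lead_coeff_mult coeff_mult_0)
    moreover have "degree (coeff g 0) < degree (lead_coeff g)"
      "degree (coeff h 0) < degree (lead_coeff h)"
      using gh low_below_lead[of g h] low_below_lead[of h g] \<open>\<not> (is_unit g \<or> is_unit h)\<close>
      by (auto simp: mult.commute)
    ultimately show False by (rule no_split)
  qed
qed

lemma degree_min_irreducible_divisor_le:
  fixes p q r :: "'a::field poly"
  assumes "p \<noteq> 0" "r dvd p" "\<not> is_unit r"
    and min: "\<forall>s. irreducible s \<and> s dvd p \<longrightarrow> degree q \<le> degree s"
  shows "degree q \<le> degree r"
  using assms(2,3)
proof (induction "degree r" arbitrary: r rule: less_induct)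
  case less
  show ?case
  proof (cases "irreducible r")
    case True
    then show ?thesis using less.prems min by blast
  next
    case False
    have "r \<noteq> 0" using assms(1) less.prems(1) by auto
    with False less.prems(2) obtain a b where r: "r = a * b" "\<not> is_unit a" "\<not> is_unit b"
      by (auto simp: irreducible_def)
    then have "a \<noteq> 0" "b \<noteq> 0" using \<open>r \<noteq> 0\<close> by auto
    then have "degree a < degree r"
      using r by (simp add: degree_mult_eq is_unit_iff_degree)
    moreover have "a dvd p" using r(1) less.prems(1) dvd_mult_left by blast
    ultimately have "degree q \<le> degree a" using less.hyps r(2) by blast
    then show ?thesis using \<open>degree a < degree r\<close> by simp
  qed
qed

theorem corollary4:
  fixes f :: "'a::field poly poly" and n :: nat
  assumes deg: "degree f = n" and n2: "n \<ge> 2"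
    and nz: "coeff f 0 * coeff f n \<noteq> 0"
    and content: "\<forall>g :: 'a poly. [:g:] dvd f \<longrightarrow> degree g = 0"
    and degs: "\<forall>i<n. degree (coeff f i) < degree (coeff f n)"
    and cases: "irreducible (coeff f n) \<or>
       (irreducible (coeff f 0) \<and>
        (\<exists>q :: 'a poly. irreducible q \<and> q dvd coeff f n \<and>
           (\<forall>r. irreducible r \<and> r dvd coeff f n \<longrightarrow> degree q \<le> degree r) \<and>
           degree (coeff f 0) + degree q \<ge> degree (coeff f n)))"
  shows "irreducible f"
proof (rule irreducibleI_dominant_lead_coeff)
  show "degree f \<noteq> 0" "coeff f 0 \<noteq> 0" using deg n2 nz by auto
  show "dominant_lead_coeff f" using degs deg by (simp add: dominant_lead_coeff_def)
  show "\<forall>b :: 'a poly. [:b:] dvd f \<longrightarrow> degree b = 0" by (rule content)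
  fix b c b\<^sub>0 c\<^sub>0
  assume an: "lead_coeff f = b * c" and a0: "coeff f 0 = b\<^sub>0 * c\<^sub>0"
    and "degree b\<^sub>0 < degree b" "degree c\<^sub>0 < degree c"
  moreover have "b \<noteq> 0" "c \<noteq> 0" "b\<^sub>0 \<noteq> 0" "c\<^sub>0 \<noteq> 0" using nz deg an a0 by auto
  ultimately have nonunits: "\<not> is_unit b" "\<not> is_unit c"
    and degrees: "degree (coeff f n) = degree b + degree c"
      "degree (coeff f 0) = degree b\<^sub>0 + degree c\<^sub>0"
    using deg by (auto simp: is_unit_iff_degree degree_mult_eq)
  from cases show False
  proof (elim disjE conjE exE)
    assume "irreducible (coeff f n)"
    then show False using an deg nonunits irreducibleD by blast
  next
    fix q :: "'a poly"
    assume "irreducible (coeff f 0)"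
      and min: "\<forall>r. irreducible r \<and> r dvd coeff f n \<longrightarrow> degree q \<le> degree r"
      and "degree (coeff f 0) + degree q \<ge> degree (coeff f n)"
    moreover have "is_unit b\<^sub>0 \<or> is_unit c\<^sub>0" using \<open>irreducible (coeff f 0)\<close> a0 irreducibleD by blast
    moreover have "degree q \<le> degree b" "degree q \<le> degree c"
      using degree_min_irreducible_divisor_le[OF _ _ _ min] nonunits nz an deg by auto
    ultimately show False using degrees \<open>degree b\<^sub>0 < degree b\<close> \<open>degree c\<^sub>0 < degree c\<close>
      by (auto simp: is_unit_iff_degree \<open>b\<^sub>0 \<noteq> 0\<close> \<open>c\<^sub>0 \<noteq> 0\<close>)
  qed
qed

end
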